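(* Let $G$ be a good finite group and let $N$ be a normal subgroup of $G$ of index $2$. Then the cyclic subgroups $\langle x\rangle$, where $x$ ranges over the $2$-elements of $G$ lying in $G\setminus N$, are not all conjugate in $G$; that is, there exist $2$-elements $x,y\in G\setminus N$ such that $\langle x\rangle$ and $\langle y\rangle$ are not conjugate in $G$.
   Context: A finite group is called good if its Sylow-2 subgroup is trivial or noncyclic. A $2$-element of $G$ is an element whose order is a power of $2$. *)

theory Defs
  imports "HOL-Algebra.Algebra" "HOL-Computational_Algebra.Primes"
begin

definition sylow2_subgroup :: "('a, 'b) monoid_scheme \<Rightarrow> 'a set \<Rightarrow> bool" where
  "sylow2_subgroup G P \<longleftrightarrow> subgroup P G \<and> card P = 2 ^ multiplicity (2::nat) (order G)"

definition good_group :: "('a, 'b) monoid_scheme \<Rightarrow> bool" where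
  "good_group G \<longleftrightarrow> (\<forall>P. sylow2_subgroup G P \<longrightarrow>
      P = {\<one>\<^bsub>G\<^esub>} \<or> \<not> cyclic_group (subgroup_generated G P))"

definition two_element :: "('a, 'b) monoid_scheme \<Rightarrow> 'a \<Rightarrow> bool" where
  "two_element G x \<longleftrightarrow> x \<in> carrier G \<and> (\<exists>k::nat. group.ord G x = 2 ^ k)"

definition conj_set :: "('a, 'b) monoid_scheme \<Rightarrow> 'a \<Rightarrow> 'a set \<Rightarrow> 'a set" where
  "conj_set G g H = (\<lambda>h. g \<otimes>\<^bsub>G\<^esub> h \<otimes>\<^bsub>G\<^esub> inv\<^bsub>G\<^esub> g) ` H"

end

(*
  Suppose every cyclic subgroup generated by a 2-element outside N were conjugate to C = <x>,
  where x lies in a Sylow 2-subgroup P but not in N (P is not contained in N as |G : N| = 2).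
  Count the pairs (h, y) with h in G, y in P - N and <h x h^-1> = <y>.  For fixed y there are
  |N_G(C)| of them.  For fixed h there are |C - N| = |C|/2 of them if h x h^-1 lies in P, and
  none otherwise; and the number of such h is |P| times the number of right cosets of P fixed
  by x, which is odd since |G : P| is.  Hence |N_G(C)| = f |C| with f odd, so that
  N_P(C) = C.  But G is good, so P is not cyclic and C is a proper subgroup of the 2-group P,
  which cannot be self-normalizing.  Both parity statements come from counting fixed points of
  the 2-element x acting on cosets.
*)

theory Submission
  imports Defs
begin

lemma card_fixpoints_involution_mod_2:
  assumes "finite A" "\<forall>a\<in>A. f a \<in> A \<and> f (f a) = a"
  shows "card A mod 2 = card {a\<in>A. f a = a} mod 2"
  using assms
proof (induction "card A" arbitrary: A rule: less_induct)
  case less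
  show ?case
  proof (cases "\<forall>a\<in>A. f a = a")
    case True
    then have "{a\<in>A. f a = a} = A" by auto
    then show ?thesis by simp
  next
    case False
    then obtain a where a: "a \<in> A" "f a \<noteq> a" by auto
    define A' where "A' = A - {a, f a}"
    have "f a \<in> A" using less a by auto
    then have card_A: "card A = card A' + 2"
      using a less(2) card_Diff_subset[of "{a, f a}" A] card_mono[of A "{a, f a}"]
      unfolding A'_def by auto
    have "f b \<in> A' \<and> f (f b) = b" if "b \<in> A'" for b
    proof -
      have b: "b \<in> A" "b \<noteq> a" "b \<noteq> f a"
        using that unfolding A'_def by auto
      then have "f (f b) = b" "f (f a) = a" "f b \<in> A"
        using less(3) a(1) by auto
      then show ?thesis
        using b unfolding A'_def by (metis Diff_iff insert_iff singletonD)
    qed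
    then have "card A' mod 2 = card {b\<in>A'. f b = b} mod 2"
      using less card_A unfolding A'_def by (intro less(1)) auto
    moreover have "{b\<in>A'. f b = b} = {b\<in>A. f b = b}"
      unfolding A'_def using a less(3) by auto
    ultimately show ?thesis using card_A by simp
  qed
qed

lemma card_fixpoints_funpow_two_power_mod_2:
  assumes "finite A" "\<forall>a\<in>A. f a \<in> A" "\<forall>a\<in>A. (f ^^ (2 ^ k)) a = a"
  shows "card A mod 2 = card {a\<in>A. f a = a} mod 2"
  using assms(2,3)
proof (induction k arbitrary: f)
  case 0
  then have "{a\<in>A. f a = a} = A" by auto
  then show ?case by simp
next
  case (Suc k)
  have "f \<circ> f = f ^^ 2"
    by (simp add: numeral_2_eq_2)
  then have "(f \<circ> f) ^^ (2 ^ k) = f ^^ (2 ^ Suc k)"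
    by (simp add: funpow_mult)
  then have "card A mod 2 = card {a\<in>A. (f \<circ> f) a = a} mod 2"
    using Suc.prems by (intro Suc.IH) (simp, simp del: comp_apply)
  also have "\<dots> = card {b\<in>{a\<in>A. (f \<circ> f) a = a}. f b = b} mod 2"
    using assms(1) Suc.prems(1) by (intro card_fixpoints_involution_mod_2) auto
  also have "{b\<in>{a\<in>A. (f \<circ> f) a = a}. f b = b} = {a\<in>A. f a = a}"
    by auto
  finally show ?case .
qed

lemma sum_card_filter_swap:
  assumes "finite A" "finite B"
  shows "(\<Sum>b\<in>B. card {a\<in>A. R a b}) = (\<Sum>a\<in>A. card {b\<in>B. R a b})"
proof -
  have card_filter: "card {x\<in>S. Q x} = (\<Sum>x\<in>S. if Q x then 1 else 0)"
    if "finite S" for S Q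
    using that by (simp add: sum.If_cases Int_def)
  show ?thesis
    using assms by (simp add: card_filter) (rule sum.swap)
qed

context group
begin

lemma conjugation_group_hom:
  assumes "g \<in> carrier G"
  shows "group_hom G G (\<lambda>h. g \<otimes> h \<otimes> inv g)"
  using assms
  by (intro group_hom.intro group_hom_axioms.intro homI is_group)
     (auto simp: m_assoc, simp add: m_assoc [symmetric])

lemma conj_set_generate:
  assumes "g \<in> carrier G" "x \<in> carrier G"
  shows "conj_set G g (generate G {x}) = generate G {g \<otimes> x \<otimes> inv g}"
  using group_hom.generate_img[OF conjugation_group_hom[OF assms(1)], of "{x}"] assms(2)
  unfolding conj_set_def by simp

lemma conj_set_one: "H \<subseteq> carrier G \<Longrightarrow> conj_set G \<one> H = H"
  unfolding conj_set_def by (auto simp: subset_iff image_iff)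

lemma conj_set_mult:
  assumes "a \<in> carrier G" "b \<in> carrier G" "H \<subseteq> carrier G"
  shows "conj_set G (a \<otimes> b) H = conj_set G a (conj_set G b H)"
  unfolding conj_set_def image_image
  using assms by (intro image_cong) (auto simp: inv_mult_group m_assoc subset_iff)

lemma card_conj_set:
  assumes "g \<in> carrier G" "H \<subseteq> carrier G"
  shows "card (conj_set G g H) = card H"
  unfolding conj_set_def
  using assms by (intro card_image inj_onI) (auto simp: subset_iff)

lemma normalizer_eq_conj_set:
  assumes "H \<subseteq> carrier G"
  shows "normalizer G H = {g \<in> carrier G. conj_set G g H = H}"
proof -
  have "(g <# H) #> inv g = conj_set G g H" for g
    unfolding conj_set_def l_coset_def r_coset_def by auto
  then show ?thesis
    using assms unfolding normalizer_def stabilizer_def by auto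
qed

lemma mem_normalizer_generate:
  assumes fin: "finite (carrier G)" and x: "x \<in> carrier G" and g: "g \<in> carrier G"
    and conj: "g \<otimes> x \<otimes> inv g \<in> generate G {x}"
  shows "g \<in> normalizer G (generate G {x})"
proof -
  let ?C = "generate G {x}"
  have C: "subgroup ?C G"
    using x generate_is_subgroup by simp
  have "finite ?C"
    using finite_subset[OF subgroup.subset[OF C] fin] .
  have "conj_set G g ?C \<subseteq> ?C"
    using conj_set_generate[OF g x] conj C by (simp add: generate_subgroup_incl)
  moreover have "card (conj_set G g ?C) = card ?C"
    using card_conj_set g subgroup.subset[OF C] by blast
  ultimately have "conj_set G g ?C = ?C"
    using \<open>finite ?C\<close> card_subset_eq by blast
  then show ?thesis
    using g subgroup.subset[OF C] by (simp add: normalizer_eq_conj_set)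
qed

lemma card_conjugators:
  assumes H: "H \<subseteq> carrier G" and g0: "g0 \<in> carrier G"
  shows "card {g \<in> carrier G. conj_set G g H = conj_set G g0 H} = card (normalizer G H)"
proof -
  have "{g \<in> carrier G. conj_set G g H = conj_set G g0 H} = (\<lambda>n. g0 \<otimes> n) ` normalizer G H"
  proof (intro equalityI subsetI)
    fix g assume "g \<in> {g \<in> carrier G. conj_set G g H = conj_set G g0 H}"
    then have g: "g \<in> carrier G" "conj_set G g H = conj_set G g0 H" by auto
    have "conj_set G (inv g0 \<otimes> g) H = conj_set G (inv g0) (conj_set G g0 H)"
      using g g0 H by (simp add: conj_set_mult)
    also have "\<dots> = H"
      using g0 H conj_set_mult[of "inv g0" g0 H] by (simp add: conj_set_one)
    finally have "inv g0 \<otimes> g \<in> normalizer G H"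
      using g g0 H by (simp add: normalizer_eq_conj_set)
    moreover have "g = g0 \<otimes> (inv g0 \<otimes> g)"
      using g g0 by (simp add: m_assoc [symmetric])
    ultimately show "g \<in> (\<lambda>n. g0 \<otimes> n) ` normalizer G H" by blast
  next
    fix g assume "g \<in> (\<lambda>n. g0 \<otimes> n) ` normalizer G H"
    then obtain n where "n \<in> carrier G" "conj_set G n H = H" "g = g0 \<otimes> n"
      using H by (auto simp: normalizer_eq_conj_set)
    then show "g \<in> {g \<in> carrier G. conj_set G g H = conj_set G g0 H}"
      using g0 H by (simp add: conj_set_mult)
  qed
  moreover have "inj_on (\<lambda>n. g0 \<otimes> n) (normalizer G H)"
    using H by (intro inj_on_subset[OF inj_on_cmult[OF g0]]) (auto simp: normalizer_eq_conj_set)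
  ultimately show ?thesis
    by (simp add: card_image)
qed

lemma rcos_eq_iff:
  assumes "subgroup H G" "a \<in> carrier G" "b \<in> carrier G"
  shows "H #> a = H #> b \<longleftrightarrow> a \<otimes> inv b \<in> H"
  using assms by (metis rcos_self repr_independence subgroup.rcos_module is_group)

lemma finite_rcosets_within:
  assumes "finite (carrier G)" "subgroup H G" "S \<subseteq> carrier G"
  shows "finite {H #> s | s. s \<in> S}"
proof -
  have "{H #> s | s. s \<in> S} \<subseteq> rcosets H"
    using assms subgroup.subset[OF assms(2)] by (auto intro: rcosetsI)
  moreover have "finite (rcosets H)"
    using assms rcosets_subset_PowG finite_Pow_iff finite_subset by metis
  ultimately show ?thesis
    using finite_subset by blast
qed

lemma card_union_rcosets:
  assumes fin: "finite (carrier G)" and H: "subgroup H G" and S: "S \<subseteq> carrier G"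
    and closed: "\<And>h s. h \<in> H \<Longrightarrow> s \<in> S \<Longrightarrow> h \<otimes> s \<in> S"
  shows "card S = card H * card {H #> s | s. s \<in> S}"
proof -
  let ?C = "{H #> s | s. s \<in> S}"
  have union: "\<Union>?C = S"
  proof
    show "\<Union>?C \<subseteq> S"
      using closed unfolding r_coset_def by auto
    show "S \<subseteq> \<Union>?C"
      using rcos_self[OF _ H] S by blast
  qed
  have cosets: "?C \<subseteq> rcosets H"
    using S subgroup.subset[OF H] by (auto intro: rcosetsI)
  have "card H * card ?C = card (\<Union>?C)"
  proof (rule card_partition)
    show "finite ?C"
      using finite_rcosets_within[OF fin H S] .
    show "finite (\<Union>?C)"
      unfolding union using finite_subset[OF S fin] .
    show "card c = card H" if "c \<in> ?C" for c
    proof -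
      have "c \<in> rcosets H"
        using that cosets by blast
      then show ?thesis
        using card_rcosets_equal subgroup.subset[OF H] by simp
    qed
    show "c1 \<inter> c2 = {}" if "c1 \<in> ?C" "c2 \<in> ?C" "c1 \<noteq> c2" for c1 c2
    proof -
      have "c1 \<in> rcosets H" "c2 \<in> rcosets H"
        using that cosets by blast+
      then show ?thesis
        using rcos_disjoint[OF H] that(3) unfolding pairwise_def disjnt_def by blast
    qed
  qed
  then show ?thesis
    using union by simp
qed

lemma card_subgroup_dvd:
  assumes "finite (carrier G)" "subgroup H G" "subgroup K G" "H \<subseteq> K"
  shows "card H dvd card K"
proof -
  have "card K = card H * card {H #> s | s. s \<in> K}"
    using assms subgroup.m_closed[OF assms(3)]
    by (intro card_union_rcosets subgroup.subset) auto
  then show ?thesis by (rule dvdI)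
qed

lemma card_rcosets_mod_2_eq_card_fixed:
  assumes fin: "finite (carrier G)" and H: "subgroup H G" and S: "S \<subseteq> carrier G"
    and closed: "\<And>s. s \<in> S \<Longrightarrow> s \<otimes> x \<in> S"
    and x: "x \<in> carrier G" "x [^] ((2::nat) ^ k) = \<one>"
  shows "card {H #> s | s. s \<in> S} mod 2
       = card {H #> s | s. s \<in> S \<and> s \<otimes> x \<otimes> inv s \<in> H} mod 2"
proof -
  let ?E = "{H #> s | s. s \<in> S}"
  define f where "f T = T #> x" for T
  have iterate: "(f ^^ n) (H #> s) = H #> (s \<otimes> x [^] n)" if "s \<in> S" for s n
  proof (induction n)
    case 0
    then show ?case
      using that S by auto
  next
    case (Suc n)
    then show ?case
      using that S x subgroup.subset[OF H]
      by (auto simp: f_def coset_mult_assoc m_assoc nat_pow_Suc)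
  qed
  have fixed_iff: "f (H #> s) = H #> s \<longleftrightarrow> s \<otimes> x \<otimes> inv s \<in> H" if "s \<in> S" for s
  proof -
    have "s \<in> carrier G"
      using that S by blast
    moreover have "f (H #> s) = H #> (s \<otimes> x)"
      using iterate[OF that, of 1] x by simp
    ultimately show ?thesis
      using rcos_eq_iff[OF H, of "s \<otimes> x" s] x by simp
  qed
  have "card ?E mod 2 = card {T \<in> ?E. f T = T} mod 2"
  proof (rule card_fixpoints_funpow_two_power_mod_2)
    show "finite ?E"
      using finite_rcosets_within[OF fin H S] .
    show "\<forall>T\<in>?E. f T \<in> ?E"
      using iterate[of _ 1] closed x(1) by auto
    show "\<forall>T\<in>?E. (f ^^ (2 ^ k)) T = T"
      using iterate x S by auto
  qed
  also have "{T \<in> ?E. f T = T} = {H #> s | s. s \<in> S \<and> s \<otimes> x \<otimes> inv s \<in> H}"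
    using fixed_iff by blast
  finally show ?thesis .
qed

lemma index_two_mult_inv_mem:
  assumes N: "subgroup N G" and index: "card (rcosets N) = 2"
    and a: "a \<in> carrier G" "a \<notin> N" and b: "b \<in> carrier G" "b \<notin> N"
  shows "a \<otimes> inv b \<in> N"
proof (rule ccontr)
  have N_carrier: "N \<subseteq> carrier G"
    using subgroup.subset[OF N] .
  assume "a \<otimes> inv b \<notin> N"
  then have "N #> a \<noteq> N #> b"
    using rcos_eq_iff[OF N a(1) b(1)] by simp
  moreover have "N #> a \<noteq> N" "N #> b \<noteq> N"
    using rcos_self[OF a(1) N] rcos_self[OF b(1) N] a(2) b(2) by auto
  ultimately have three: "card {N, N #> a, N #> b} = 3"
    by auto
  have "N \<in> rcosets N"
    using rcosetsI[OF N_carrier one_closed] N_carrier by simp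
  then have "{N, N #> a, N #> b} \<subseteq> rcosets N"
    using rcosetsI[OF N_carrier a(1)] rcosetsI[OF N_carrier b(1)] by blast
  moreover have "finite (rcosets N)"
    using index by (metis card.infinite zero_neq_numeral)
  ultimately have "card {N, N #> a, N #> b} \<le> card (rcosets N)"
    by (rule card_mono[rotated])
  then show False
    using three index by simp
qed

lemma card_subgroup_index_two:
  assumes N: "subgroup N G" "card (rcosets N) = 2"
    and D: "subgroup D G" "finite D" and d: "d \<in> D" "d \<notin> N"
  shows "card D = 2 * card (D - N)"
proof -
  have d_carrier: "d \<in> carrier G"
    using d(1) subgroup.subset[OF D(1)] by blast
  have "(\<lambda>n. d \<otimes> n) ` (D \<inter> N) = D - N"
  proof (intro equalityI subsetI)
    fix e assume "e \<in> (\<lambda>n. d \<otimes> n) ` (D \<inter> N)"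
    then obtain n where n: "n \<in> D" "n \<in> N" "e = d \<otimes> n" by blast
    then have "e \<otimes> inv n = d"
      using d_carrier subgroup.subset[OF N(1)] by (auto simp: m_assoc)
    then have "e \<notin> N"
      using n(2) d(2) N(1) subgroup.m_closed subgroup.m_inv_closed by metis
    then show "e \<in> D - N"
      using n d(1) D(1) subgroup.m_closed by fastforce
  next
    fix e assume e: "e \<in> D - N"
    then have e_carrier: "e \<in> carrier G"
      using subgroup.subset[OF D(1)] by blast
    have "inv d \<notin> N" "inv e \<notin> N"
      using d e d_carrier e_carrier N(1) subgroup.m_inv_closed inv_inv by (metis DiffD2)+
    then have "inv d \<otimes> e \<in> N"
      using index_two_mult_inv_mem[OF N, of "inv d" "inv e"] d_carrier e_carrier by simp
    moreover have "inv d \<otimes> e \<in> D"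
      using e d D(1) subgroup.m_closed subgroup.m_inv_closed by fastforce
    moreover have "e = d \<otimes> (inv d \<otimes> e)"
      using d_carrier e_carrier by (simp add: m_assoc [symmetric])
    ultimately show "e \<in> (\<lambda>n. d \<otimes> n) ` (D \<inter> N)" by blast
  qed
  moreover have "inj_on (\<lambda>n. d \<otimes> n) (D \<inter> N)"
    using inj_on_subset[OF inj_on_cmult[OF d_carrier]] subgroup.subset[OF D(1)] by blast
  ultimately have "card (D \<inter> N) = card (D - N)"
    using card_image by fastforce
  moreover have "card D = card (D \<inter> N) + card (D - N)"
    using D(2) card_Int_Diff by blast
  ultimately show ?thesis by simp
qed

lemma card_subgroup_two_power:
  assumes "finite (carrier G)" "subgroup P G" "card P = 2 ^ m" "subgroup H G" "H \<subseteq> P"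
  obtains a where "card H = 2 ^ a"
proof -
  have "card H dvd 2 ^ m"
    using card_subgroup_dvd assms by metis
  then show ?thesis
    using that by (auto simp: divides_primepow_nat)
qed

lemma normalizer_exceeds_proper_cyclic_subgroup:
  assumes fin: "finite (carrier G)" and P: "subgroup P G" "card P = 2 ^ m"
    and x: "x \<in> P" and proper: "generate G {x} \<noteq> P"
  obtains s where "s \<in> P" "s \<notin> generate G {x}" "s \<in> normalizer G (generate G {x})"
proof -
  let ?C = "generate G {x}"
  have x_carrier: "x \<in> carrier G"
    using x subgroup.subset[OF P(1)] by blast
  have C: "subgroup ?C G" "?C \<subseteq> P"
    using x_carrier x P(1) by (auto simp: generate_is_subgroup generate_subgroup_incl)
  obtain a where a: "card ?C = 2 ^ a"
    using card_subgroup_two_power[OF fin P C] .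
  have "card ?C < card P"
    using C(2) proper P(2) psubset_card_mono[of P ?C] by fastforce
  then have "a < m"
    using a P(2) by simp
  have x_order: "x [^] ((2::nat) ^ a) = \<one>"
    using pow_ord_eq_1[OF x_carrier] generate_pow_card[OF x_carrier] a(1) by simp
  let ?E = "{?C #> s | s. s \<in> P}"
  let ?F = "{?C #> s | s. s \<in> P \<and> s \<otimes> x \<otimes> inv s \<in> ?C}"
  have "card P = card ?C * card ?E"
    using C(1) P(1) subgroup.m_closed[OF P(1)] C(2) subgroup.subset[OF P(1)]
    by (intro card_union_rcosets fin) auto
  then have "card ?E = 2 ^ (m - a)"
    using a P(2) \<open>a < m\<close> by (simp add: power_diff)
  then have "even (card ?E)"
    using \<open>a < m\<close> by simp
  then have "even (card ?F)"
    using card_rcosets_mod_2_eq_card_fixed[OF fin C(1) subgroup.subset[OF P(1)] _ x_carrier x_order]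
      subgroup.m_closed[OF P(1) _ x]
    by (simp add: even_iff_mod_2_eq_zero)
  then have "?F \<noteq> {?C}"
    by auto
  moreover have "?C \<in> ?F"
  proof -
    have "?C = ?C #> \<one>" "\<one> \<otimes> x \<otimes> inv \<one> \<in> ?C"
      using x_carrier subgroup.subset[OF C(1)] generate.incl[of x "{x}" G] by auto
    then show ?thesis
      using subgroup.one_closed[OF P(1)] by blast
  qed
  ultimately obtain T where "T \<in> ?F" "T \<noteq> ?C"
    by blast
  then obtain s where s: "s \<in> P" "s \<otimes> x \<otimes> inv s \<in> ?C" "?C #> s \<noteq> ?C"
    by blast
  have s_carrier: "s \<in> carrier G"
    using s(1) subgroup.subset[OF P(1)] by blast
  show ?thesis
  proof (rule that[OF s(1)])
    show "s \<notin> ?C"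
      using s(3) subgroup.rcos_const[OF C(1) is_group] by blast
    show "s \<in> normalizer G ?C"
      using mem_normalizer_generate[OF fin x_carrier s_carrier s(2)] .
  qed
qed

lemma generate_singleton_neq_if_not_cyclic:
  assumes P: "subgroup P G" and not_cyclic: "\<not> cyclic_group (subgroup_generated G P)"
    and x: "x \<in> carrier G"
  shows "generate G {x} \<noteq> P"
proof
  assume generated: "generate G {x} = P"
  have "generate G (carrier G \<inter> P) = P"
    using subgroup.carrier_subgroup_generated_subgroup[OF P] by (simp add: carrier_subgroup_generated)
  then have "subgroup_generated G P = subgroup_generated G {x}"
    using generated x unfolding subgroup_generated_def by simp
  then show False
    using not_cyclic cyclic_group_generated by simp
qed

end

lemma sylow2_subgroup_exists:
  assumes "group G" "finite (carrier G)"
  obtains P where "sylow2_subgroup G P"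
proof -
  have "order G \<noteq> 0"
    using assms monoid.order_gt_0_iff_finite[OF group.is_monoid] by fastforce
  then obtain r where "order G = 2 ^ multiplicity (2::nat) (order G) * r"
    using multiplicity_decompose'[of "order G" 2] by auto
  then show ?thesis
    using sylow_thm[of 2 G _ r] assms that unfolding sylow2_subgroup_def by auto
qed

locale sylow2 = group G for G (structure) +
  fixes P
  assumes finite_carrier: "finite (carrier G)" and sylow2: "sylow2_subgroup G P"
begin

lemma sylow_subgroup: "subgroup P G"
  using sylow2 unfolding sylow2_subgroup_def by simp

lemma card_sylow: "card P = 2 ^ multiplicity 2 (order G)"
  using sylow2 unfolding sylow2_subgroup_def by simp

lemma odd_card_rcosets: "odd (card (rcosets P))"
proof -
  have "order G \<noteq> 0"
    using finite_carrier by (simp add: order_gt_0_iff_finite)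
  then obtain r where r: "order G = 2 ^ multiplicity (2::nat) (order G) * r" "odd r"
    using multiplicity_decompose'[of "order G" 2] by auto
  then have "card (rcosets P) * card P = card P * r"
    using lagrange[OF sylow_subgroup] card_sylow by simp
  then show ?thesis
    using r(2) card_sylow by simp
qed

lemma two_element_if_mem:
  assumes "y \<in> P"
  shows "two_element G y"
proof -
  have y: "y \<in> carrier G"
    using assms subgroup.subset[OF sylow_subgroup] by blast
  then have "subgroup (generate G {y}) G" "generate G {y} \<subseteq> P"
    using assms sylow_subgroup by (auto simp: generate_is_subgroup generate_subgroup_incl)
  then obtain a where "card (generate G {y}) = 2 ^ a"
    using card_subgroup_two_power[OF finite_carrier sylow_subgroup card_sylow] by metis
  then show ?thesis
    unfolding two_element_def using y generate_pow_card[OF y] by auto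
qed

lemma not_subset_index_two:
  assumes N: "subgroup N G" "card (rcosets N) = 2"
  shows "\<not> P \<subseteq> N"
proof
  assume "P \<subseteq> N"
  then obtain k where k: "card N = card P * k"
    using card_subgroup_dvd[OF finite_carrier sylow_subgroup N(1)] by blast
  have "card (rcosets P) * card P = card P * (2 * k)"
    using lagrange[OF sylow_subgroup] lagrange[OF N(1)] N(2) k by simp
  moreover have "card P \<noteq> 0"
    using card_sylow by simp
  ultimately have "card (rcosets P) = 2 * k"
    by simp
  then show False
    using odd_card_rcosets by simp
qed

lemma card_conjugators_into_sylow:
  assumes x: "x \<in> carrier G" "x [^] ((2::nat) ^ k) = \<one>"
  obtains f where "odd f" "card {g \<in> carrier G. g \<otimes> x \<otimes> inv g \<in> P} = card P * f"
proof -
  let ?M = "{g \<in> carrier G. g \<otimes> x \<otimes> inv g \<in> P}"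
  have P_carrier: "P \<subseteq> carrier G"
    using subgroup.subset[OF sylow_subgroup] .
  have closed: "p \<otimes> g \<in> ?M" if "p \<in> P" "g \<in> ?M" for p g
  proof -
    have "p \<otimes> g \<otimes> x \<otimes> inv (p \<otimes> g) = p \<otimes> (g \<otimes> x \<otimes> inv g) \<otimes> inv p"
      using that x P_carrier by (auto simp: m_assoc inv_mult_group)
    also have "\<dots> \<in> P"
      using that sylow_subgroup subgroup.m_closed subgroup.m_inv_closed by fastforce
    finally show ?thesis
      using that P_carrier by auto
  qed
  have "card ?M = card P * card {P #> s | s. s \<in> ?M}"
    using closed by (intro card_union_rcosets finite_carrier sylow_subgroup) auto
  moreover have "card (rcosets P) mod 2 = card {P #> s | s. s \<in> ?M} mod 2"
  proof -
    have "rcosets P = {P #> s | s. s \<in> carrier G}"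
      unfolding RCOSETS_def by auto
    then show ?thesis
      using card_rcosets_mod_2_eq_card_fixed[OF finite_carrier sylow_subgroup _ _ x] x(1)
      by simp
  qed
  ultimately show ?thesis
    using that odd_card_rcosets by (simp add: odd_iff_mod_2_eq_one)
qed

context
  fixes N x
  assumes normal: "N \<lhd> G" and index_two: "card (rcosets N) = 2"
    and x: "x \<in> P" "x \<notin> N"
    and conjugate: "\<And>y. y \<in> P \<Longrightarrow> y \<notin> N \<Longrightarrow>
      \<exists>g \<in> carrier G. conj_set G g (generate G {x}) = generate G {y}"
begin

lemma card_conjugators_generating:
  assumes y: "y \<in> P" "y \<notin> N"
  shows "card {h \<in> carrier G. generate G {h \<otimes> x \<otimes> inv h} = generate G {y}}
       = card (normalizer G (generate G {x}))"
proof -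
  have x_carrier: "x \<in> carrier G"
    using subgroup.mem_carrier[OF sylow_subgroup x(1)] .
  obtain g0 where g0: "g0 \<in> carrier G" "conj_set G g0 (generate G {x}) = generate G {y}"
    using conjugate[OF y] by blast
  have "{h \<in> carrier G. generate G {h \<otimes> x \<otimes> inv h} = generate G {y}}
      = {h \<in> carrier G. conj_set G h (generate G {x}) = conj_set G g0 (generate G {x})}"
    using g0 conj_set_generate[OF _ x_carrier] by auto
  then show ?thesis
    using card_conjugators[OF generate_incl g0(1)] x_carrier by simp
qed

lemma card_generators_of_conjugate:
  assumes h: "h \<in> carrier G"
  shows "card {y \<in> P - N. generate G {h \<otimes> x \<otimes> inv h} = generate G {y}}
       = (if h \<otimes> x \<otimes> inv h \<in> P then card (generate G {x} - N) else 0)"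
proof (cases "h \<otimes> x \<otimes> inv h \<in> P")
  case False
  have "h \<otimes> x \<otimes> inv h \<in> generate G {y}" if "y \<in> P" "generate G {h \<otimes> x \<otimes> inv h} = generate G {y}" for y
    using that generate.incl[of "h \<otimes> x \<otimes> inv h" "{h \<otimes> x \<otimes> inv h}" G] by simp
  moreover have "generate G {y} \<subseteq> P" if "y \<in> P" for y
    using that sylow_subgroup by (simp add: generate_subgroup_incl)
  ultimately have "{y \<in> P - N. generate G {h \<otimes> x \<otimes> inv h} = generate G {y}} = {}"
    using False by blast
  then show ?thesis
    using False by (simp only: card.empty if_False)
next
  case True
  let ?C = "generate G {x}" and ?D = "generate G {h \<otimes> x \<otimes> inv h}"
  have x_carrier: "x \<in> carrier G"
    using subgroup.mem_carrier[OF sylow_subgroup x(1)] .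
  have C: "subgroup ?C G" "finite ?C"
    using x_carrier generate_is_subgroup finite_subset[OF generate_incl finite_carrier] by auto
  have D: "subgroup ?D G" "finite ?D" "?D \<subseteq> P"
    using h x_carrier True sylow_subgroup finite_subset[OF generate_incl finite_carrier]
    by (auto simp: generate_is_subgroup generate_subgroup_incl)
  have D_conj: "?D = conj_set G h ?C"
    using conj_set_generate[OF h x_carrier] by simp
  then have card_D: "card ?D = card ?C"
    using card_conj_set[OF h generate_incl] x_carrier by simp
  have "h \<otimes> x \<otimes> inv h \<notin> N"
  proof
    assume "h \<otimes> x \<otimes> inv h \<in> N"
    then have "inv h \<otimes> (h \<otimes> x \<otimes> inv h) \<otimes> inv (inv h) \<in> N"
      using normal.inv_op_closed2[OF normal] h by blast
    then show False
      using h x_carrier x(2) by (simp add: m_assoc, simp add: m_assoc [symmetric])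
  qed
  then have "card ?D = 2 * card (?D - N)"
    using card_subgroup_index_two[OF normal_imp_subgroup[OF normal] index_two D(1,2)]
      generate.incl[of "h \<otimes> x \<otimes> inv h" "{h \<otimes> x \<otimes> inv h}" G] by blast
  moreover have "card ?C = 2 * card (?C - N)"
    using card_subgroup_index_two[OF normal_imp_subgroup[OF normal] index_two C]
      generate.incl[of x "{x}" G] x(2) by blast
  moreover have "{y \<in> P - N. ?D = generate G {y}} = ?D - N"
  proof (intro equalityI subsetI)
    fix y assume "y \<in> {y \<in> P - N. ?D = generate G {y}}"
    then show "y \<in> ?D - N"
      using generate.incl[of y "{y}" G] by auto
  next
    fix y assume y: "y \<in> ?D - N"
    then have "y \<in> P"
      using D(3) by blast
    then obtain g where g: "g \<in> carrier G" "conj_set G g ?C = generate G {y}"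
      using conjugate y by blast
    have "generate G {y} \<subseteq> ?D"
      using y D(1) by (simp add: generate_subgroup_incl)
    moreover have "card (generate G {y}) = card ?D"
      using g card_conj_set[OF g(1) generate_incl[of "{x}"]] x_carrier card_D by simp
    ultimately have "?D = generate G {y}"
      using D(2) card_subset_eq by metis
    then show "y \<in> {y \<in> P - N. ?D = generate G {y}}"
      using y \<open>y \<in> P\<close> by blast
  qed
  ultimately show ?thesis
    using True card_D by simp
qed

lemma card_normalizer_generate:
  obtains f where "odd f" "card (normalizer G (generate G {x})) = f * card (generate G {x})"
proof -
  let ?C = "generate G {x}" and ?M = "{h \<in> carrier G. h \<otimes> x \<otimes> inv h \<in> P}"
  let ?R = "\<lambda>h y. generate G {h \<otimes> x \<otimes> inv h} = generate G {y}"
  have x_carrier: "x \<in> carrier G"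
    using subgroup.mem_carrier[OF sylow_subgroup x(1)] .
  obtain k where "ord x = 2 ^ k"
    using two_element_if_mem[OF x(1)] unfolding two_element_def by blast
  then have x_order: "x [^] ((2::nat) ^ k) = \<one>"
    using pow_ord_eq_1[OF x_carrier] by simp
  obtain f where f: "odd f" "card ?M = card P * f"
    using card_conjugators_into_sylow[OF x_carrier x_order] by blast
  have finite_PN: "finite (P - N)"
    using finite_subset[OF subgroup.subset[OF sylow_subgroup] finite_carrier] by blast
  have "card (P - N) * card (normalizer G ?C) = (\<Sum>y\<in>P - N. card {h \<in> carrier G. ?R h y})"
    using card_conjugators_generating by simp
  also have "\<dots> = (\<Sum>h\<in>carrier G. card {y \<in> P - N. ?R h y})"
    using sum_card_filter_swap[OF finite_carrier finite_PN] .
  also have "\<dots> = (\<Sum>h\<in>carrier G. if h \<in> ?M then card (?C - N) else 0)"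
    using card_generators_of_conjugate by (intro sum.cong) auto
  also have "\<dots> = card ?M * card (?C - N)"
    using finite_carrier by (simp add: sum.If_cases Int_def)
  finally have count: "card (P - N) * card (normalizer G ?C) = card P * f * card (?C - N)"
    using f(2) by simp
  have "card P = 2 * card (P - N)"
    using card_subgroup_index_two[OF normal_imp_subgroup[OF normal] index_two sylow_subgroup]
      finite_subset[OF subgroup.subset[OF sylow_subgroup] finite_carrier] x by blast
  moreover have "card ?C = 2 * card (?C - N)"
    using card_subgroup_index_two[OF normal_imp_subgroup[OF normal] index_two]
      generate_is_subgroup finite_subset[OF generate_incl finite_carrier]
      x_carrier generate.incl[of x "{x}" G] x(2) by auto
  moreover have "card (P - N) \<noteq> 0"
    using x finite_PN by auto
  ultimately have "card (normalizer G ?C) = f * card ?C"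
    using count by simp
  then show ?thesis
    using that f(1) by blast
qed

lemma sylow_inter_normalizer_generate: "P \<inter> normalizer G (generate G {x}) = generate G {x}"
proof -
  let ?C = "generate G {x}"
  let ?K = "P \<inter> normalizer G ?C"
  have x_carrier: "x \<in> carrier G"
    using subgroup.mem_carrier[OF sylow_subgroup x(1)] .
  have C: "subgroup ?C G" "?C \<subseteq> P"
    using x_carrier x(1) sylow_subgroup by (auto simp: generate_is_subgroup generate_subgroup_incl)
  have normalizer: "subgroup (normalizer G ?C) G"
    using normalizer_imp_subgroup[OF generate_incl] x_carrier by simp
  have K: "subgroup ?K G"
    using subgroups_Inter_pair[OF sylow_subgroup normalizer] .
  have "c \<in> normalizer G ?C" if "c \<in> ?C" for c
  proof -
    have "c \<in> carrier G"
      using that subgroup.subset[OF C(1)] by blast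
    moreover have "c \<otimes> x \<otimes> inv c \<in> ?C"
      using that generate.incl[of x "{x}" G]
      by (intro subgroup.m_closed[OF C(1)] subgroup.m_inv_closed[OF C(1)]) auto
    ultimately show ?thesis
      using mem_normalizer_generate[OF finite_carrier x_carrier] by blast
  qed
  then have C_K: "?C \<subseteq> ?K"
    using C(2) by blast
  obtain a where a: "card ?C = 2 ^ a"
    using card_subgroup_two_power[OF finite_carrier sylow_subgroup card_sylow C] by metis
  obtain j where j: "card ?K = 2 ^ j"
    using card_subgroup_two_power[OF finite_carrier sylow_subgroup card_sylow K] by blast
  obtain f where f: "odd f" "card (normalizer G ?C) = f * card ?C"
    using card_normalizer_generate by blast
  have "(2::nat) ^ j dvd f * 2 ^ a"
    using card_subgroup_dvd[OF finite_carrier K normalizer] f(2) a j by auto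
  then have "(2::nat) ^ j dvd 2 ^ a"
    using f(1) by (simp add: coprime_dvd_mult_right_iff)
  then have "card ?K \<le> card ?C"
    using a j by (simp add: power_dvd_iff_le_multiplicity)
  then show ?thesis
    using C_K finite_subset[OF subgroup.subset[OF K] finite_carrier] card_seteq by blast
qed

end

end

theorem lemma2p7:
  fixes G (structure) and N :: "'a set"
  assumes "group G"
    and "finite (carrier G)"
    and "good_group G"
    and "N \<lhd> G"
    and "card (rcosets\<^bsub>G\<^esub> N) = 2"
  shows "\<exists>x y. x \<in> carrier G - N \<and> y \<in> carrier G - N \<and>
           two_element G x \<and> two_element G y \<and>
           \<not> (\<exists>g \<in> carrier G. conj_set G g (generate G {x}) = generate G {y})"
proof (rule ccontr)
  assume all_conjugate: "\<not> ?thesis"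
  interpret group G by fact
  obtain P where P: "sylow2_subgroup G P"
    using sylow2_subgroup_exists assms(1,2) by blast
  interpret sylow2 G P
    using P assms(2) by unfold_locales
  have N: "subgroup N G"
    using assms(4) normal_imp_subgroup by blast
  obtain x where x: "x \<in> P" "x \<notin> N"
    using not_subset_index_two[OF N assms(5)] by blast
  have x_carrier: "x \<in> carrier G"
    using subgroup.mem_carrier[OF sylow_subgroup x(1)] .
  have "P \<noteq> {\<one>}"
    using x subgroup.one_closed[OF N] by blast
  then have "generate G {x} \<noteq> P"
    using assms(3) P generate_singleton_neq_if_not_cyclic[OF sylow_subgroup _ x_carrier]
    unfolding good_group_def by blast
  then obtain s where "s \<in> P" "s \<notin> generate G {x}" "s \<in> normalizer G (generate G {x})"
    using normalizer_exceeds_proper_cyclic_subgroup[OF finite_carrier sylow_subgroup card_sylow x(1)]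
    by blast
  moreover have "P \<inter> normalizer G (generate G {x}) = generate G {x}"
    using all_conjugate x x_carrier two_element_if_mem subgroup.subset[OF sylow_subgroup]
    by (intro sylow_inter_normalizer_generate[OF assms(4,5) x]) blast
  ultimately show False
    by blast
qed

end
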